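(* Let $\tilde{\mathfrak g}$ be a real Lie algebra with a metric $\langle,\rangle$ and a pseudo-Iwasawa decomposition $\tilde{\mathfrak g}=\mathfrak g\oplus^\perp\mathfrak a$. Let $H\in\tilde{\mathfrak g}$ be defined by $\langle H,v\rangle=\operatorname{Tr}(\operatorname{ad}v)$ for all $v\in\tilde{\mathfrak g}$, let $\widetilde{\operatorname{ric}}$ be the Ricci tensor of $\tilde{\mathfrak g}$ and $\operatorname{ric}$ that of $\mathfrak g$ with the restricted metric. Then $\widetilde{\operatorname{ric}}(v,w)=\operatorname{ric}(v,w)-\langle[H,v],w\rangle$ for $v,w\in\mathfrak g$; $\widetilde{\operatorname{ric}}(v,X)=0$ for $v\in\mathfrak g$, $X\in\mathfrak a$; $\widetilde{\operatorname{ric}}(X,Y)=-\operatorname{Tr}(\operatorname{ad}X\circ\operatorname{ad}Y)$ for $X,Y\in\mathfrak a$.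
   Context: A metric on a Lie algebra is a nondegenerate symmetric bilinear form, possibly indefinite; the Ricci tensor is that of the corresponding left-invariant pseudo-Riemannian metric on the simply connected Lie group. A pseudo-Iwasawa decomposition of a metric Lie algebra $\tilde{\mathfrak g}$ is an orthogonal direct sum of vector spaces $\tilde{\mathfrak g}=\mathfrak g\oplus^\perp\mathfrak a$ with $\mathfrak g$ a nilpotent ideal, $\mathfrak a$ an abelian subalgebra, and $\operatorname{ad}X$ self-adjoint for every $X\in\mathfrak a$. *)

theory Defs
  imports "HOL-Analysis.Analysis"
begin

text \<open>Finite-dimensional real vector space: a type of class euclidean_space
  (its built-in inner product plays no role).  A Lie algebra lives on a
  carrier subspace V; the bracket is a bilinear map br.\<close>

definition lie_algebra_on :: "'a::euclidean_space set \<Rightarrow> ('a \<Rightarrow> 'a \<Rightarrow> 'a) \<Rightarrow> bool" where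
  "lie_algebra_on V br \<longleftrightarrow> subspace V \<and> bilinear br \<and>
     (\<forall>x\<in>V. \<forall>y\<in>V. br x y \<in> V) \<and>
     (\<forall>x\<in>V. \<forall>y\<in>V. br x y = - br y x) \<and>
     (\<forall>x\<in>V. \<forall>y\<in>V. \<forall>z\<in>V. br x (br y z) + br y (br z x) + br z (br x y) = 0)"

definition metric_on :: "'a::euclidean_space set \<Rightarrow> ('a \<Rightarrow> 'a \<Rightarrow> real) \<Rightarrow> bool" where
  "metric_on V m \<longleftrightarrow> bilinear m \<and> (\<forall>x\<in>V. \<forall>y\<in>V. m x y = m y x) \<and>
     (\<forall>x\<in>V. (\<forall>y\<in>V. m x y = 0) \<longrightarrow> x = 0)"

definition trace_on :: "'a::euclidean_space set \<Rightarrow> ('a \<Rightarrow> 'a) \<Rightarrow> real" where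
  "trace_on V f = (let B = (SOME B. B \<subseteq> V \<and> independent B \<and> span B = V)
     in \<Sum>b\<in>B. real_vector.representation B (f b) b)"

text \<open>Levi-Civita connection of the left-invariant metric (Koszul formula):
  2 m (nabla u v) x = m [u,v] x - m [v,x] u + m [x,u] v.\<close>
definition lc_nabla :: "'a::euclidean_space set \<Rightarrow> ('a \<Rightarrow> 'a \<Rightarrow> 'a) \<Rightarrow> ('a \<Rightarrow> 'a \<Rightarrow> real)
    \<Rightarrow> 'a \<Rightarrow> 'a \<Rightarrow> 'a" where
  "lc_nabla V br m u v = (THE z. z \<in> V \<and>
     (\<forall>x\<in>V. 2 * m z x = m (br u v) x - m (br v x) u + m (br x u) v))"

definition curv :: "'a::euclidean_space set \<Rightarrow> ('a \<Rightarrow> 'a \<Rightarrow> 'a) \<Rightarrow> ('a \<Rightarrow> 'a \<Rightarrow> real)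
    \<Rightarrow> 'a \<Rightarrow> 'a \<Rightarrow> 'a \<Rightarrow> 'a" where
  "curv V br m x y z = lc_nabla V br m x (lc_nabla V br m y z)
     - lc_nabla V br m y (lc_nabla V br m x z) - lc_nabla V br m (br x y) z"

definition ricci :: "'a::euclidean_space set \<Rightarrow> ('a \<Rightarrow> 'a \<Rightarrow> 'a) \<Rightarrow> ('a \<Rightarrow> 'a \<Rightarrow> real)
    \<Rightarrow> 'a \<Rightarrow> 'a \<Rightarrow> real" where
  "ricci V br m v w = trace_on V (\<lambda>x. curv V br m x v w)"

fun lcs :: "('a::euclidean_space \<Rightarrow> 'a \<Rightarrow> 'a) \<Rightarrow> 'a set \<Rightarrow> nat \<Rightarrow> 'a set" where
  "lcs br g 0 = g"
| "lcs br g (Suc n) = span {br x y | x y. x \<in> g \<and> y \<in> lcs br g n}"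

definition nilpotent_on :: "('a::euclidean_space \<Rightarrow> 'a \<Rightarrow> 'a) \<Rightarrow> 'a set \<Rightarrow> bool" where
  "nilpotent_on br g \<longleftrightarrow> (\<exists>n. lcs br g n = {0})"

definition lie_ideal :: "('a::euclidean_space \<Rightarrow> 'a \<Rightarrow> 'a) \<Rightarrow> 'a set \<Rightarrow> bool" where
  "lie_ideal br g \<longleftrightarrow> subspace g \<and> (\<forall>x. \<forall>y\<in>g. br x y \<in> g)"

definition abelian_subalgebra :: "('a::euclidean_space \<Rightarrow> 'a \<Rightarrow> 'a) \<Rightarrow> 'a set \<Rightarrow> bool" where
  "abelian_subalgebra br a \<longleftrightarrow> subspace a \<and> (\<forall>x\<in>a. \<forall>y\<in>a. br x y = 0)"

definition pseudo_iwasawa :: "('a::euclidean_space \<Rightarrow> 'a \<Rightarrow> 'a) \<Rightarrow> ('a \<Rightarrow> 'a \<Rightarrow> real)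
    \<Rightarrow> 'a set \<Rightarrow> 'a set \<Rightarrow> bool" where
  "pseudo_iwasawa br m g a \<longleftrightarrow>
     lie_ideal br g \<and> nilpotent_on br g \<and> abelian_subalgebra br a \<and>
     g \<inter> a = {0} \<and> (\<forall>z. \<exists>v\<in>g. \<exists>X\<in>a. z = v + X) \<and>
     (\<forall>v\<in>g. \<forall>X\<in>a. m v X = 0) \<and>
     (\<forall>X\<in>a. \<forall>u w. m (br X u) w = m u (br X w))"

end

theory Submission
  imports Defs
begin

text \<open>Since the ideal \<open>g\<close> is
  orthogonal to the abelian subalgebra \<open>a\<close>, which acts by self-adjoint derivations, one finds
  \<open>\<nabla>\<^sub>X = 0\<close> and \<open>\<nabla>\<^sub>u Y = [u, Y]\<close> for \<open>X, Y \<in> a\<close>, while for \<open>v, w \<in> g\<close> the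
  connection \<open>\<nabla>\<^sub>v w\<close> is that of \<open>g\<close> plus the \<open>a\<close>-valued second fundamental form
  \<open>II(v, w)\<close>, characterised by \<open>\<langle>II(v, w), X\<rangle> = \<langle>[X, v], w\<rangle>\<close>. The Ricci tensor is a trace,
  evaluated in dual frames of \<open>g\<close> and \<open>a\<close>. Every trace of an endomorphism lowering the lower
  central series of \<open>g\<close> vanishes because \<open>g\<close> is nilpotent; in particular \<open>H \<in> a\<close>. What
  survives is \<open>-tr(ad X ad Y)\<close> on \<open>a\<close> and, on \<open>g\<close>, the term
  \<open>-tr(ad II(v, w)) = -\<langle>H, II(v, w)\<rangle> = -\<langle>[H, v], w\<rangle>\<close>; the other contributions of the
  second fundamental form cancel against the \<open>a\<close>-part of the trace by the Jacobi identity.\<close>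

section \<open>Traces on subspaces\<close>

lemma trace_on_representation:
  fixes V :: "'a::euclidean_space set"
  assumes "subspace V"
  obtains B where "B \<subseteq> V" "independent B" "span B = V" "finite B"
    "\<And>T. trace_on V T = (\<Sum>b\<in>B. representation B (T b) b)"
proof -
  define B where "B = (SOME B. B \<subseteq> V \<and> independent B \<and> span B = V)"
  obtain B0 where B0: "B0 \<subseteq> V" "independent B0" "V \<subseteq> span B0"
    by (rule basis_exists)
  then have "span B0 = V"
    using assms by (meson span_minimal subset_antisym)
  then have B: "B \<subseteq> V" "independent B" "span B = V"
    unfolding B_def using B0 someI[of "\<lambda>B. B \<subseteq> V \<and> independent B \<and> span B = V" B0] by auto
  show thesis
  proof (rule that)
    show "trace_on V T = (\<Sum>b\<in>B. representation B (T b) b)" for T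
      by (simp add: trace_on_def B_def Let_def)
  qed (use B independent_imp_finite in auto)
qed

lemma trace_on_frame:
  fixes V :: "'a::euclidean_space set"
  assumes V: "subspace V" and T: "linear T" "T ` V \<subseteq> V"
    and I: "finite I" "e ` I \<subseteq> V" and \<phi>: "\<And>i. i \<in> I \<Longrightarrow> linear (\<phi> i)"
    and frame: "\<And>x. x \<in> V \<Longrightarrow> x = (\<Sum>i\<in>I. \<phi> i x *\<^sub>R e i)"
  shows "trace_on V T = (\<Sum>i\<in>I. \<phi> i (T (e i)))"
proof -
  obtain B where B: "B \<subseteq> V" "independent B" "span B = V" "finite B"
    and tr: "trace_on V T = (\<Sum>b\<in>B. representation B (T b) b)"
    using trace_on_representation[OF V] by metis
  let ?r = "\<lambda>i. representation B (T (e i))"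
  have Te: "T (e i) \<in> span B" if "i \<in> I" for i
    using that I T B by auto
  have "representation B (T b) b = (\<Sum>i\<in>I. \<phi> i b * ?r i b)" if "b \<in> B" for b
  proof -
    have "b \<in> V"
      using that B by blast
    have "T b = T (\<Sum>i\<in>I. \<phi> i b *\<^sub>R e i)"
      using frame[OF \<open>b \<in> V\<close>] by (rule arg_cong)
    also have "\<dots> = (\<Sum>i\<in>I. \<phi> i b *\<^sub>R T (e i))"
      by (simp add: linear_sum[OF T(1)] linear_scale[OF T(1)])
    finally show ?thesis
      using B(2) Te by (simp add: real_vector.representation_sum real_vector.representation_scale span_scale)
  qed
  then have "trace_on V T = (\<Sum>b\<in>B. \<Sum>i\<in>I. ?r i b * \<phi> i b)"
    using tr by (simp add: mult.commute)
  also have "\<dots> = (\<Sum>i\<in>I. \<Sum>b\<in>B. ?r i b * \<phi> i b)"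
    by (rule sum.swap)
  also have "\<dots> = (\<Sum>i\<in>I. \<phi> i (\<Sum>b\<in>B. ?r i b *\<^sub>R b))"
    using \<phi> by (intro sum.cong) (simp_all add: linear_sum linear_scale)
  also have "\<dots> = (\<Sum>i\<in>I. \<phi> i (T (e i)))"
    using B(2,4) Te by (simp add: real_vector.sum_representation_eq)
  finally show ?thesis .
qed

lemma trace_on_uminus:
  fixes V :: "'a::euclidean_space set"
  assumes "subspace V" "T ` V \<subseteq> V"
  shows "trace_on V (\<lambda>x. - T x) = - trace_on V T"
proof -
  obtain B where B: "B \<subseteq> V" "independent B" "span B = V"
    and tr: "\<And>T. trace_on V T = (\<Sum>b\<in>B. representation B (T b) b)"
    using trace_on_representation[OF assms(1)] by metis
  have "representation B (- T b) b = - representation B (T b) b" if "b \<in> B" for b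
    using that B assms(2) by (subst real_vector.representation_neg) auto
  then show ?thesis
    unfolding tr by (simp add: sum_negf)
qed

lemma sum_representation_superset:
  assumes "independent B'" "B \<subseteq> B'" "finite B" "x \<in> span B"
  shows "(\<Sum>b\<in>B. representation B' x b *\<^sub>R b) = x"
proof -
  have "independent B"
    using assms(1,2) real_vector.dependent_mono by blast
  moreover have "representation B' x = representation B x"
    using assms(1,4,2) by (rule real_vector.representation_extend)
  ultimately show ?thesis
    using assms(3,4) by (simp add: real_vector.sum_representation_eq)
qed

text \<open>Coordinates in a basis of the whole space are globally linear, as \<open>trace_on_frame\<close> requires.\<close>

lemma trace_on_extended_basis:
  fixes V :: "'a::euclidean_space set"
  assumes V: "subspace V" and T: "linear T" "T ` V \<subseteq> V"
    and B: "B \<subseteq> V" "V \<subseteq> span B" "B \<subseteq> B'" and B': "independent B'" "span B' = UNIV"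
  shows "trace_on V T = (\<Sum>b\<in>B. representation B' (T b) b)"
proof (rule trace_on_frame[where e = "\<lambda>b. b" and \<phi> = "\<lambda>b x. representation B' x b", OF V T])
  have "independent B"
    using B(3) B'(1) real_vector.dependent_mono by blast
  then show fin: "finite B"
    by (rule independent_imp_finite)
  show "(\<lambda>b. b) ` B \<subseteq> V"
    using B(1) by simp
  show "linear (\<lambda>x. representation B' x b)" for b
    using B' by (intro linearI) (simp_all add: real_vector.representation_add real_vector.representation_scale)
  show "x = (\<Sum>b\<in>B. representation B' x b *\<^sub>R b)" if "x \<in> V" for x
    using that B(2) by (intro sum_representation_superset[OF B'(1) B(3) fin, symmetric]) blast
qed

lemma trace_on_subspace:
  fixes V :: "'a::euclidean_space set"
  assumes V: "subspace V" and W: "subspace W" "W \<subseteq> V" and T: "linear T" "T ` V \<subseteq> W"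
  shows "trace_on V T = trace_on W T"
proof -
  obtain C where C: "C \<subseteq> W" "independent C" "W \<subseteq> span C"
    by (rule basis_exists)
  have "C \<subseteq> V"
    using C W by blast
  then obtain B where B: "C \<subseteq> B" "B \<subseteq> V" "independent B" "V \<subseteq> span B"
    using C(2) by (rule real_vector.maximal_independent_subset_extend)
  obtain B' where B': "B \<subseteq> B'" "independent B'" "UNIV \<subseteq> span B'"
    using subset_UNIV B(3) by (rule real_vector.maximal_independent_subset_extend)
  have span_B': "span B' = UNIV"
    using B'(3) by blast
  have "trace_on V T = (\<Sum>b\<in>B. representation B' (T b) b)"
    using B B' T W by (intro trace_on_extended_basis[OF V T(1) _ _ _ _ B'(2) span_B']) auto
  also have "\<dots> = (\<Sum>b\<in>C. representation B' (T b) b)"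
  proof (rule sum.mono_neutral_right[OF independent_imp_finite[OF B(3)] B(1)], intro ballI)
    fix b assume b: "b \<in> B - C"
    have "T b \<in> span C"
      using b B(2) T(2) C(3) by blast
    moreover have "C \<subseteq> B'"
      using B(1) B'(1) by blast
    ultimately have "representation B' (T b) b = representation C (T b) b"
      by (simp only: real_vector.representation_extend[OF B'(2)])
    then show "representation B' (T b) b = 0"
      using b by (metis DiffD2 real_vector.representation_ne_zero)
  qed
  also have "\<dots> = trace_on W T"
    using B B' C T W by (intro trace_on_extended_basis[symmetric, OF W(1) T(1) _ _ _ _ B'(2) span_B']) force+
  finally show ?thesis .
qed

lemma trace_on_zero_space: "trace_on {0::'a::euclidean_space} T = 0"
proof -
  obtain B :: "'a set" where B: "B \<subseteq> {0}" "independent B"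
    and tr: "\<And>T. trace_on {0} T = (\<Sum>b\<in>B. representation B (T b) b)"
    using trace_on_representation[OF subspace_single_0] by metis
  then have "B = {}"
    using real_vector.dependent_zero by blast
  then show ?thesis
    by (simp add: tr)
qed

lemma trace_on_filtration_lowering:
  fixes F :: "nat \<Rightarrow> 'a::euclidean_space set"
  assumes F: "\<And>k. subspace (F k)" "\<And>k. F (Suc k) \<subseteq> F k" "F n = {0}"
    and T: "linear T" "\<And>k. T ` F k \<subseteq> F (Suc k)"
  shows "trace_on (F 0) T = 0"
proof -
  have "trace_on (F 0) T = trace_on (F k) T" for k
  proof (induction k)
    case (Suc k)
    also have "trace_on (F k) T = trace_on (F (Suc k)) T"
      using F(1,1,2) T by (rule trace_on_subspace)
    finally show ?case .
  qed simp
  then show ?thesis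
    using F(3) trace_on_zero_space by metis
qed

section \<open>Dual frames of a metric\<close>

lemma bilinear_sum_scale_left:
  assumes "bilinear \<beta>"
  shows "\<beta> (\<Sum>i\<in>I. c i *\<^sub>R x i) y = (\<Sum>i\<in>I. c i *\<^sub>R \<beta> (x i) y)"
proof -
  interpret linear "\<lambda>x. \<beta> x y"
    using assms by (simp add: bilinear_def)
  show ?thesis
    by (simp add: sum scale)
qed

lemma bilinear_sum_scale_right:
  assumes "bilinear \<beta>"
  shows "\<beta> y (\<Sum>i\<in>I. c i *\<^sub>R x i) = (\<Sum>i\<in>I. c i *\<^sub>R \<beta> y (x i))"
proof -
  interpret linear "\<beta> y"
    using assms by (simp add: bilinear_def)
  show ?thesis
    by (simp add: sum scale)
qed

lemma independent_coefficients_eq: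
  fixes B :: "'a::euclidean_space set"
  assumes "independent B" "(\<Sum>v\<in>B. k v *\<^sub>R v) = (\<Sum>v\<in>B. k' v *\<^sub>R v)"
  shows "\<forall>v\<in>B. k v = k' v"
proof -
  have "(\<Sum>v\<in>B. (k v - k' v) *\<^sub>R v) = 0"
    using assms(2) by (simp add: scaleR_diff_left sum_subtractf)
  then have "\<forall>v\<in>B. k v - k' v = 0"
    using assms(1) unfolding independent_explicit by (elim conjE allE[of _ "\<lambda>v. k v - k' v"]) blast
  then show ?thesis
    by simp
qed

definition dual_frame :: "'a::euclidean_space set \<Rightarrow> ('a \<Rightarrow> 'a \<Rightarrow> real) \<Rightarrow> 'a set \<Rightarrow> ('a \<Rightarrow> 'a) \<Rightarrow> bool"
  where "dual_frame V m B f \<longleftrightarrow> finite B \<and> B \<subseteq> V \<and> f ` B \<subseteq> V \<and>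
    (\<forall>x\<in>V. x = (\<Sum>b\<in>B. m x (f b) *\<^sub>R b)) \<and> (\<forall>x\<in>V. x = (\<Sum>b\<in>B. m x b *\<^sub>R f b))"

lemma dual_frameD:
  assumes "dual_frame V m B f"
  shows "finite B" "B \<subseteq> V" "\<And>b. b \<in> B \<Longrightarrow> f b \<in> V"
    and dual_frame_expansion: "\<And>x. x \<in> V \<Longrightarrow> x = (\<Sum>b\<in>B. m x (f b) *\<^sub>R b)"
    and dual_frame_expansion': "\<And>x. x \<in> V \<Longrightarrow> x = (\<Sum>b\<in>B. m x b *\<^sub>R f b)"
  using assms unfolding dual_frame_def by blast+

locale metric_subspace =
  fixes V :: "'a::euclidean_space set" and m :: "'a \<Rightarrow> 'a \<Rightarrow> real"
  assumes subspace: "subspace V" and metric: "metric_on V m"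
begin

lemma bilinear_m: "bilinear m"
  using metric by (simp add: metric_on_def)

lemma m_sym: "x \<in> V \<Longrightarrow> y \<in> V \<Longrightarrow> m x y = m y x"
  using metric by (simp add: metric_on_def)

lemma m_nondegenerate: "x \<in> V \<Longrightarrow> (\<And>y. y \<in> V \<Longrightarrow> m x y = 0) \<Longrightarrow> x = 0"
  using metric by (simp add: metric_on_def)

lemma nondegenerate_eqI:
  assumes "z \<in> V" "z' \<in> V" "\<And>x. x \<in> V \<Longrightarrow> m z x = m z' x"
  shows "z = z'"
  using m_nondegenerate[of "z - z'"] assms subspace
  by (simp add: bilinear_lsub[OF bilinear_m] subspace_diff)

lemma pairing_map_surjective:
  assumes B: "B \<subseteq> V" "independent B" "V \<subseteq> span B"
  shows "(\<lambda>y. \<Sum>b\<in>B. m b y *\<^sub>R b) ` V = V"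
proof -
  define G where "G y = (\<Sum>b\<in>B. m b y *\<^sub>R b)" for y
  have G: "linear G"
    unfolding G_def using bilinear_m
    by (intro linearI) (simp_all add: bilinear_radd bilinear_rmul scaleR_add_left sum.distrib scaleR_sum_right)
  have GV: "G ` V \<subseteq> V"
    unfolding G_def using B(1) subspace by (auto intro!: subspace_sum subspace_scale)
  have "inj_on G V"
  proof (subst linear_injective_on_subspace_0[OF G subspace], intro ballI impI)
    fix y assume y: "y \<in> V" and "G y = 0"
    then have "\<forall>b\<in>B. m b y = 0"
      using independent_coefficients_eq[OF B(2), of "\<lambda>b. m b y" "\<lambda>_. 0"] by (simp add: G_def)
    show "y = 0"
    proof (rule m_nondegenerate[OF y])
      fix x assume x: "x \<in> V"
      have "x = (\<Sum>b\<in>B. representation B x b *\<^sub>R b)"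
        using x B(3) independent_imp_finite[OF B(2)]
        by (intro sum_representation_superset[OF B(2) subset_refl, symmetric]) blast+
      then have "m x y = m (\<Sum>b\<in>B. representation B x b *\<^sub>R b) y"
        by (rule arg_cong[where f = "\<lambda>x. m x y"])
      also have "\<dots> = 0"
        using \<open>\<forall>b\<in>B. m b y = 0\<close> by (simp add: bilinear_sum_scale_left[OF bilinear_m])
      finally show "m y x = 0"
        using m_sym[OF x y] by simp
    qed
  qed
  then have "dim (G ` V) = dim V"
    using dim_image_eq[OF G, of V] subspace by (simp add: span_eq_iff[THEN iffD2])
  then show ?thesis
    using subspace_dim_equal[OF linear_subspace_image[OF G subspace] subspace GV] by (simp add: G_def)
qed

lemma dual_basis_exists:
  assumes B: "B \<subseteq> V" "independent B" "V \<subseteq> span B"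
  obtains f where "\<And>c. c \<in> B \<Longrightarrow> f c \<in> V"
    and "\<And>b c. b \<in> B \<Longrightarrow> c \<in> B \<Longrightarrow> m b (f c) = (if b = c then 1 else 0)"
proof -
  have "\<forall>c\<in>B. \<exists>y. y \<in> V \<and> (\<Sum>b\<in>B. m b y *\<^sub>R b) = c"
  proof
    fix c assume "c \<in> B"
    then have "c \<in> (\<lambda>y. \<Sum>b\<in>B. m b y *\<^sub>R b) ` V"
      using pairing_map_surjective[OF B] B(1) by blast
    then show "\<exists>y. y \<in> V \<and> (\<Sum>b\<in>B. m b y *\<^sub>R b) = c"
      by blast
  qed
  then have "\<exists>f. \<forall>c\<in>B. f c \<in> V \<and> (\<Sum>b\<in>B. m b (f c) *\<^sub>R b) = c"
    by (rule bchoice)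
  then obtain f where f: "\<forall>c\<in>B. f c \<in> V \<and> (\<Sum>b\<in>B. m b (f c) *\<^sub>R b) = c"
    by blast
  show thesis
  proof (rule that)
    show "f c \<in> V" if "c \<in> B" for c
      using f that by blast
    fix b c assume "b \<in> B" "c \<in> B"
    moreover have "(\<Sum>v\<in>B. m v (f c) *\<^sub>R v) = (\<Sum>v\<in>B. (if v = c then 1 else 0) *\<^sub>R v)"
      using f \<open>c \<in> B\<close> independent_imp_finite[OF B(2)]
      by (simp add: if_distrib[of "\<lambda>t. t *\<^sub>R _"] cong: if_cong)
    ultimately show "m b (f c) = (if b = c then 1 else 0)"
      using independent_coefficients_eq[OF B(2), of "\<lambda>v. m v (f c)" "\<lambda>v. if v = c then 1 else 0"] by blast
  qed
qed

lemma dual_basis_expansion: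
  assumes B: "independent B" "V \<subseteq> span B"
    and f: "\<And>b c. b \<in> B \<Longrightarrow> c \<in> B \<Longrightarrow> m b (f c) = (if b = c then 1 else 0)"
    and x: "x \<in> V"
  shows "x = (\<Sum>c\<in>B. m x (f c) *\<^sub>R c)"
proof -
  have fin: "finite B"
    using B(1) by (rule independent_imp_finite)
  have rep: "x = (\<Sum>b\<in>B. representation B x b *\<^sub>R b)"
    using x B(2) by (intro sum_representation_superset[OF B(1) subset_refl fin, symmetric]) blast
  have "m x (f c) = representation B x c" if c: "c \<in> B" for c
  proof -
    have "m x (f c) = m (\<Sum>b\<in>B. representation B x b *\<^sub>R b) (f c)"
      using rep by (rule arg_cong[where f = "\<lambda>x. m x (f c)"])
    also have "\<dots> = (\<Sum>b\<in>B. representation B x b * (if b = c then 1 else 0))"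
      using f c by (simp add: bilinear_sum_scale_left[OF bilinear_m])
    also have "\<dots> = representation B x c"
      using c fin by (simp add: if_distrib[of "\<lambda>t. _ * t"] cong: if_cong)
    finally show ?thesis .
  qed
  then show ?thesis
    using rep by simp
qed

lemma dual_frame_of_dual_basis:
  assumes B: "B \<subseteq> V" "independent B" "V \<subseteq> span B"
    and f: "\<And>c. c \<in> B \<Longrightarrow> f c \<in> V"
      "\<And>b c. b \<in> B \<Longrightarrow> c \<in> B \<Longrightarrow> m b (f c) = (if b = c then 1 else 0)"
  shows "dual_frame V m B f"
proof -
  have expansion: "x = (\<Sum>c\<in>B. m x (f c) *\<^sub>R c)" if "x \<in> V" for x
    using B(2,3) f(2) that by (rule dual_basis_expansion)
  have expansion': "x = (\<Sum>c\<in>B. m x c *\<^sub>R f c)" if x: "x \<in> V" for x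
  proof (rule nondegenerate_eqI[OF x])
    show "(\<Sum>c\<in>B. m x c *\<^sub>R f c) \<in> V"
      using f(1) subspace by (auto intro!: subspace_sum subspace_scale)
    fix y assume y: "y \<in> V"
    have "m (\<Sum>c\<in>B. m x c *\<^sub>R f c) y = (\<Sum>c\<in>B. m y (f c) * m x c)"
      using m_sym[OF f(1) y] by (simp add: bilinear_sum_scale_left[OF bilinear_m] mult.commute)
    also have "\<dots> = m x (\<Sum>c\<in>B. m y (f c) *\<^sub>R c)"
      by (simp add: bilinear_sum_scale_right[OF bilinear_m])
    also have "\<dots> = m x y"
      using expansion[OF y] by simp
    finally show "m x y = m (\<Sum>c\<in>B. m x c *\<^sub>R f c) y"
      by simp
  qed
  show ?thesis
    unfolding dual_frame_def using independent_imp_finite[OF B(2)] B(1) f(1) expansion expansion'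
    by blast
qed

lemma dual_frame_exists: "\<exists>B f. dual_frame V m B f"
proof -
  obtain B where "B \<subseteq> V" "independent B" "V \<subseteq> span B"
    by (rule basis_exists)
  moreover obtain f where "\<And>c. c \<in> B \<Longrightarrow> f c \<in> V"
    "\<And>b c. b \<in> B \<Longrightarrow> c \<in> B \<Longrightarrow> m b (f c) = (if b = c then 1 else 0)"
    using dual_basis_exists[OF calculation] by metis
  ultimately show ?thesis
    using dual_frame_of_dual_basis by blast
qed

lemma dual_frame_trace:
  assumes D: "dual_frame V m B f" and T: "linear T" "T ` V \<subseteq> V"
  shows "trace_on V T = (\<Sum>b\<in>B. m (T b) (f b))"
proof (rule trace_on_frame[OF subspace T dual_frameD(1)[OF D]])
  show "(\<lambda>b. b) ` B \<subseteq> V"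
    using dual_frameD(2)[OF D] by simp
  show "linear (\<lambda>x. m x (f b))" for b
    using bilinear_m by (simp add: bilinear_def)
qed (use dual_frame_expansion[OF D] in blast)

lemma dual_frame_sum_swap:
  assumes D: "dual_frame V m B f" and \<beta>: "bilinear \<beta>"
  shows "(\<Sum>b\<in>B. \<beta> (f b) b) = (\<Sum>b\<in>B. \<beta> b (f b))"
proof -
  note fB = dual_frameD(3)[OF D]
  have "(\<Sum>b\<in>B. \<beta> (f b) b) = (\<Sum>b\<in>B. \<Sum>c\<in>B. m (f b) (f c) *\<^sub>R \<beta> c b)"
  proof (rule sum.cong[OF refl])
    fix b assume "b \<in> B"
    then have "\<beta> (f b) b = \<beta> (\<Sum>c\<in>B. m (f b) (f c) *\<^sub>R c) b"
      using dual_frame_expansion[OF D fB] by metis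
    then show "\<beta> (f b) b = (\<Sum>c\<in>B. m (f b) (f c) *\<^sub>R \<beta> c b)"
      by (simp add: bilinear_sum_scale_left[OF \<beta>])
  qed
  also have "\<dots> = (\<Sum>c\<in>B. \<beta> c (\<Sum>b\<in>B. m (f c) (f b) *\<^sub>R b))"
    using m_sym fB by (subst sum.swap) (simp add: bilinear_sum_scale_right[OF \<beta>])
  also have "\<dots> = (\<Sum>c\<in>B. \<beta> c (f c))"
    using dual_frame_expansion[OF D fB] by simp
  finally show ?thesis .
qed

lemma dual_frame_sum_adjoint:
  assumes D: "dual_frame V m B f" and \<beta>: "bilinear \<beta>"
    and S: "S ` V \<subseteq> V" "\<And>x y. x \<in> V \<Longrightarrow> y \<in> V \<Longrightarrow> m (S x) y = m x (S y)"
  shows "(\<Sum>b\<in>B. \<beta> (S b) (f b)) = (\<Sum>b\<in>B. \<beta> b (S (f b)))"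
proof -
  note BV = dual_frameD(2)[OF D] and fB = dual_frameD(3)[OF D]
  have "(\<Sum>b\<in>B. \<beta> (S b) (f b)) = (\<Sum>b\<in>B. \<Sum>c\<in>B. m b (S (f c)) *\<^sub>R \<beta> c (f b))"
  proof (rule sum.cong[OF refl])
    fix b assume b: "b \<in> B"
    then have "S b \<in> V"
      using BV S(1) by blast
    then have "\<beta> (S b) (f b) = \<beta> (\<Sum>c\<in>B. m (S b) (f c) *\<^sub>R c) (f b)"
      using dual_frame_expansion[OF D] by metis
    also have "\<dots> = (\<Sum>c\<in>B. m b (S (f c)) *\<^sub>R \<beta> c (f b))"
      using b BV fB S(2) by (simp add: bilinear_sum_scale_left[OF \<beta>] subset_iff)
    finally show "\<beta> (S b) (f b) = (\<Sum>c\<in>B. m b (S (f c)) *\<^sub>R \<beta> c (f b))" .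
  qed
  also have "\<dots> = (\<Sum>c\<in>B. \<beta> c (\<Sum>b\<in>B. m (S (f c)) b *\<^sub>R f b))"
    using m_sym BV fB S(1) by (subst sum.swap) (simp add: bilinear_sum_scale_right[OF \<beta>] subset_iff image_subset_iff)
  also have "\<dots> = (\<Sum>c\<in>B. \<beta> c (S (f c)))"
    using dual_frame_expansion'[OF D] fB S(1) by (simp add: image_subset_iff)
  finally show ?thesis .
qed

lemma functional_representable:
  assumes \<psi>: "linear \<psi>"
  obtains z where "z \<in> V" "\<And>x. x \<in> V \<Longrightarrow> m z x = \<psi> x"
proof -
  obtain B f where D: "dual_frame V m B f"
    using dual_frame_exists by blast
  note BV = dual_frameD(2)[OF D] and fB = dual_frameD(3)[OF D]
  define z where "z = (\<Sum>b\<in>B. \<psi> b *\<^sub>R f b)"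
  show thesis
  proof (rule that)
    show "z \<in> V"
      unfolding z_def using fB subspace by (auto intro!: subspace_sum subspace_scale)
    fix x assume x: "x \<in> V"
    have "m z x = (\<Sum>b\<in>B. m x (f b) *\<^sub>R \<psi> b)"
      unfolding z_def using m_sym[OF _ x] fB by (simp add: bilinear_sum_scale_left[OF bilinear_m] mult.commute)
    also have "\<dots> = \<psi> (\<Sum>b\<in>B. m x (f b) *\<^sub>R b)"
      by (simp add: linear_sum[OF \<psi>] linear_scale[OF \<psi>])
    also have "\<dots> = \<psi> x"
      using dual_frame_expansion[OF D x] by simp
    finally show "m z x = \<psi> x" .
  qed
qed

end

section \<open>The Levi-Civita connection\<close>

definition koszul :: "('a::real_vector \<Rightarrow> 'a \<Rightarrow> 'a) \<Rightarrow> ('a \<Rightarrow> 'a \<Rightarrow> real) \<Rightarrow> 'a \<Rightarrow> 'a \<Rightarrow> 'a \<Rightarrow> real"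
  where "koszul br m u v x = m (br u v) x - m (br v x) u + m (br x u) v"

lemma koszul_bilinear:
  assumes "bilinear br" "bilinear m"
  shows "bilinear (\<lambda>u v. koszul br m u v x)"
  unfolding bilinear_def koszul_def
  by (intro conjI allI linearI) (simp_all add: bilinear_ladd[OF assms(1)] bilinear_radd[OF assms(1)]
      bilinear_lmul[OF assms(1)] bilinear_rmul[OF assms(1)] bilinear_ladd[OF assms(2)]
      bilinear_radd[OF assms(2)] bilinear_lmul[OF assms(2)] bilinear_rmul[OF assms(2)] algebra_simps)

lemma koszul_linear:
  assumes "bilinear br" "bilinear m"
  shows "linear (koszul br m u v)"
  unfolding koszul_def
  by (intro linearI) (simp_all add: bilinear_ladd[OF assms(1)] bilinear_radd[OF assms(1)]
      bilinear_lmul[OF assms(1)] bilinear_rmul[OF assms(1)] bilinear_ladd[OF assms(2)]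
      bilinear_radd[OF assms(2)] bilinear_lmul[OF assms(2)] bilinear_rmul[OF assms(2)] algebra_simps)

locale levi_civita = metric_subspace V m for V :: "'a::euclidean_space set" and m +
  fixes br :: "'a::euclidean_space \<Rightarrow> 'a \<Rightarrow> 'a"
  assumes bilinear_bracket: "bilinear br"
begin

lemma lc_nabla_ex1: "\<exists>!z. z \<in> V \<and> (\<forall>x\<in>V. 2 * m z x = koszul br m u v x)"
proof -
  have "linear (\<lambda>x. koszul br m u v x / 2)"
    using koszul_linear[OF bilinear_bracket bilinear_m] by (simp add: linear_iff add_divide_distrib)
  then obtain z where z: "z \<in> V" "\<And>x. x \<in> V \<Longrightarrow> m z x = koszul br m u v x / 2"
    using functional_representable by blast
  have z2: "2 * m z x = koszul br m u v x" if "x \<in> V" for x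
    using z(2)[OF that] by simp
  show ?thesis
  proof (rule ex1I[of _ z])
    show "z \<in> V \<and> (\<forall>x\<in>V. 2 * m z x = koszul br m u v x)"
      using z(1) z2 by blast
    fix z' assume z': "z' \<in> V \<and> (\<forall>x\<in>V. 2 * m z' x = koszul br m u v x)"
    show "z' = z"
    proof (rule nondegenerate_eqI)
      fix x assume "x \<in> V"
      then have "2 * m z' x = 2 * m z x"
        using z' z2 by simp
      then show "m z' x = m z x"
        by simp
    qed (use z' z(1) in auto)
  qed
qed

lemma lc_nabla_mem: "lc_nabla V br m u v \<in> V"
  and lc_nabla_koszul: "x \<in> V \<Longrightarrow> 2 * m (lc_nabla V br m u v) x = koszul br m u v x"
  using theI'[OF lc_nabla_ex1[of u v]] unfolding lc_nabla_def koszul_def by auto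

lemma lc_nabla_eqI:
  assumes "z \<in> V" "\<And>x. x \<in> V \<Longrightarrow> 2 * m z x = koszul br m u v x"
  shows "lc_nabla V br m u v = z"
  using lc_nabla_ex1[of u v] lc_nabla_mem lc_nabla_koszul assms by blast

lemma bilinear_lc_nabla: "bilinear (lc_nabla V br m)"
proof -
  note K = koszul_bilinear[OF bilinear_bracket bilinear_m]
  note simps = bilinear_ladd[OF bilinear_m] bilinear_lmul[OF bilinear_m] distrib_left lc_nabla_koszul
    bilinear_ladd[OF K] bilinear_radd[OF K] bilinear_lmul[OF K] bilinear_rmul[OF K]
  have "lc_nabla V br m (u + u') v = lc_nabla V br m u v + lc_nabla V br m u' v"
    and "lc_nabla V br m v (u + u') = lc_nabla V br m v u + lc_nabla V br m v u'"
    and "lc_nabla V br m (c *\<^sub>R u) v = c *\<^sub>R lc_nabla V br m u v"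
    and "lc_nabla V br m v (c *\<^sub>R u) = c *\<^sub>R lc_nabla V br m v u" for u u' v c
    by (intro lc_nabla_eqI; simp add: simps lc_nabla_mem subspace_add subspace_scale subspace)+
  then show ?thesis
    unfolding bilinear_def by (intro conjI allI linearI) simp_all
qed

lemma linear_curv: "linear (\<lambda>x. curv V br m x v w)"
  using bilinear_lc_nabla bilinear_bracket unfolding curv_def
  by (intro linearI) (simp_all add: bilinear_ladd bilinear_radd bilinear_lmul bilinear_rmul algebra_simps)

lemma curv_mem: "curv V br m x v w \<in> V"
  unfolding curv_def using lc_nabla_mem subspace by (simp add: subspace_diff)

end

section \<open>Pseudo-Iwasawa decompositions\<close>

locale pseudo_iwasawa_algebra =
  fixes br :: "'a::euclidean_space \<Rightarrow> 'a \<Rightarrow> 'a" and m :: "'a \<Rightarrow> 'a \<Rightarrow> real" and g a :: "'a set"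
  assumes lie: "lie_algebra_on UNIV br" and metric: "metric_on UNIV m"
    and iwasawa: "pseudo_iwasawa br m g a"
begin

lemma bilinear_br: "bilinear br"
  using lie unfolding lie_algebra_on_def by blast

lemma bilinear_m: "bilinear m"
  using metric by (simp add: metric_on_def)

lemma m_sym: "m x y = m y x"
  using metric unfolding metric_on_def by blast

lemma br_anticomm: "br x y = - br y x"
  using lie unfolding lie_algebra_on_def by blast

lemma br_jacobi: "br x (br y z) = br (br x y) z + br y (br x z)"
proof -
  have "br x (br y z) + br y (br z x) + br z (br x y) = 0"
    using lie unfolding lie_algebra_on_def by blast
  then have "br x (br y z) = - br y (br z x) - br z (br x y)"
    by (simp add: algebra_simps eq_neg_iff_add_eq_0)
  also have "br y (br z x) = - br y (br x z)"
    using br_anticomm[of z x] by (simp add: bilinear_rneg[OF bilinear_br])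
  also have "br z (br x y) = - br (br x y) z"
    by (rule br_anticomm)
  finally show ?thesis
    by simp
qed

lemma linear_br_left: "linear (\<lambda>x. br x y)"
  and linear_br_right: "linear (br x)"
  using bilinear_br by (simp_all add: bilinear_def)

lemma m_sum_left: "m (sum F S) u = (\<Sum>b\<in>S. m (F b) u)"
proof -
  have "linear (\<lambda>x. m x u)"
    using bilinear_m by (simp add: bilinear_def)
  then show ?thesis
    by (rule linear_sum)
qed

lemma subspace_g: "subspace g"
  and g_ideal: "y \<in> g \<Longrightarrow> br x y \<in> g"
  and g_nilpotent: "\<exists>n. lcs br g n = {0}"
  and subspace_a: "subspace a"
  and a_abelian: "X \<in> a \<Longrightarrow> Y \<in> a \<Longrightarrow> br X Y = 0"
  and g_a_orthogonal: "v \<in> g \<Longrightarrow> X \<in> a \<Longrightarrow> m v X = 0"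
  and ad_a_self_adjoint: "X \<in> a \<Longrightarrow> m (br X u) w = m u (br X w)"
  using iwasawa unfolding pseudo_iwasawa_def lie_ideal_def nilpotent_on_def abelian_subalgebra_def
  by blast+

lemma a_g_orthogonal: "v \<in> g \<Longrightarrow> X \<in> a \<Longrightarrow> m X v = 0"
  using g_a_orthogonal m_sym by metis

lemma decompose:
  obtains v X where "v \<in> g" "X \<in> a" "z = v + X"
  using iwasawa unfolding pseudo_iwasawa_def by blast

lemma bracket_in_g: "br u x \<in> g"
proof -
  obtain v X where v: "v \<in> g" "X \<in> a" "x = v + X"
    by (rule decompose)
  obtain v' X' where v': "v' \<in> g" "X' \<in> a" "u = v' + X'"
    by (rule decompose)
  have "br u x = br u v + - br X v' + br X' X"
    using v v' br_anticomm[of v' X] by (simp add: bilinear_radd[OF bilinear_br] bilinear_ladd[OF bilinear_br])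
  then show ?thesis
    using g_ideal[OF v(1)] g_ideal[OF v'(1)] a_abelian[OF v'(2) v(2)] subspace_g
    by (simp add: subspace_diff)
qed

lemma m_br_a_swap: "X \<in> a \<Longrightarrow> m (br u X) w = - m (br X w) u"
  using ad_a_self_adjoint[of X u w] br_anticomm[of u X] m_sym[of u "br X w"]
  by (simp add: bilinear_lneg[OF bilinear_m])

lemma metric_on_g: "metric_on g m"
  and metric_on_a: "metric_on a m"
proof -
  have nondegenerate: "x = 0" if "\<And>y. m x y = 0" for x
    using that metric unfolding metric_on_def by blast
  have "x = 0" if "x \<in> g" "\<forall>y\<in>g. m x y = 0" for x
  proof (rule nondegenerate)
    fix z
    obtain v X where "v \<in> g" "X \<in> a" "z = v + X"
      by (rule decompose)
    then show "m x z = 0"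
      using that g_a_orthogonal by (simp add: bilinear_radd[OF bilinear_m])
  qed
  moreover have "x = 0" if "x \<in> a" "\<forall>y\<in>a. m x y = 0" for x
  proof (rule nondegenerate)
    fix z
    obtain v X where "v \<in> g" "X \<in> a" "z = v + X"
      by (rule decompose)
    then show "m x z = 0"
      using that a_g_orthogonal by (simp add: bilinear_radd[OF bilinear_m])
  qed
  ultimately show "metric_on g m" "metric_on a m"
    unfolding metric_on_def using bilinear_m m_sym by blast+
qed

sublocale ambient: levi_civita UNIV m br
  using metric bilinear_br by unfold_locales simp_all

sublocale ideal: levi_civita g m br
  using subspace_g metric_on_g bilinear_br by unfold_locales

sublocale abelian: metric_subspace a m
  using subspace_a metric_on_a by unfold_locales

lemma lcs_subspace: "subspace (lcs br g k)"
  by (cases k) (simp_all add: subspace_g)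

lemma lcs_bracket: "x \<in> g \<Longrightarrow> y \<in> lcs br g k \<Longrightarrow> br x y \<in> lcs br g (Suc k)"
  by (auto intro: span_base)

lemma lcs_bracket': "x \<in> g \<Longrightarrow> y \<in> lcs br g k \<Longrightarrow> br y x \<in> lcs br g (Suc k)"
  using lcs_bracket[of x y k] br_anticomm[of y x] subspace_neg[OF lcs_subspace[of "Suc k"]] by simp

lemma lcs_subset_g: "lcs br g k \<subseteq> g"
proof (induction k)
  case (Suc k)
  then have "{br x y | x y. x \<in> g \<and> y \<in> lcs br g k} \<subseteq> g"
    using g_ideal by blast
  then show ?case
    using subspace_g by (simp add: span_minimal)
qed simp

lemma lcs_decreasing: "lcs br g (Suc k) \<subseteq> lcs br g k"
proof (induction k)
  case 0
  show ?case
    using lcs_subset_g[of 1] by simp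
next
  case (Suc k)
  have "{br x y | x y. x \<in> g \<and> y \<in> lcs br g (Suc k)} \<subseteq> lcs br g (Suc k)"
    using Suc.IH lcs_bracket by blast
  then show ?case
    using lcs_subspace[of "Suc k"] by (simp add: span_minimal)
qed

lemma lcs_ad_invariant: "y \<in> lcs br g k \<Longrightarrow> br z y \<in> lcs br g k"
proof (induction k arbitrary: y)
  case 0
  then show ?case
    using g_ideal by simp
next
  case (Suc k)
  define S where "S = {br x y | x y. x \<in> g \<and> y \<in> lcs br g k}"
  have "br z ` S \<subseteq> lcs br g (Suc k)"
  proof
    fix u assume "u \<in> br z ` S"
    then obtain x y where xy: "x \<in> g" "y \<in> lcs br g k" "u = br z (br x y)"
      unfolding S_def by blast
    then have "u = br (br z x) y + br x (br z y)"
      using br_jacobi[of z x y] by simp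
    then show "u \<in> lcs br g (Suc k)"
      using lcs_bracket[OF g_ideal[OF xy(1)] xy(2)] lcs_bracket[OF xy(1) Suc.IH[OF xy(2)]]
        lcs_subspace[of "Suc k"] by (simp add: subspace_add)
  qed
  then have "span (br z ` S) \<subseteq> lcs br g (Suc k)"
    using lcs_subspace[of "Suc k"] by (rule span_minimal)
  with linear_br_right have "br z ` span S \<subseteq> lcs br g (Suc k)"
    by (simp add: linear_span_image)
  then show ?case
    using Suc.prems unfolding S_def by auto
qed

lemma lcs_ad_invariant_left: "x \<in> lcs br g k \<Longrightarrow> br x u \<in> lcs br g k"
  using lcs_ad_invariant[of x k u] br_anticomm[of x u] subspace_neg[OF lcs_subspace] by simp

lemma trace_on_g_lowering:
  assumes "linear T" "\<And>k x. x \<in> lcs br g k \<Longrightarrow> T x \<in> lcs br g (Suc k)"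
  shows "trace_on g T = 0"
proof -
  obtain n where "lcs br g n = {0}"
    using g_nilpotent by blast
  then show ?thesis
    using trace_on_filtration_lowering[of "lcs br g", OF lcs_subspace lcs_decreasing _ assms(1)] assms(2)
    by auto
qed

lemma trace_ad_g_eq_0: "u \<in> g \<Longrightarrow> trace_on UNIV (br u) = 0"
proof -
  assume u: "u \<in> g"
  have "trace_on UNIV (br u) = trace_on g (br u)"
    using subspace_g bracket_in_g by (intro trace_on_subspace[OF subspace_UNIV _ _ linear_br_right]) auto
  also have "\<dots> = 0"
    using linear_br_right lcs_bracket[OF u] by (rule trace_on_g_lowering)
  finally show ?thesis .
qed

lemma mean_curvature_in_a:
  assumes H: "\<And>v. m H v = trace_on UNIV (br v)"
  shows "H \<in> a"
proof -
  obtain Hg Ha where Hg: "Hg \<in> g" "Ha \<in> a" "H = Hg + Ha"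
    by (rule decompose)
  have "m Hg y = 0" if "y \<in> g" for y
    using H[of y] trace_ad_g_eq_0[OF that] a_g_orthogonal[OF that Hg(2)] Hg(3)
    by (simp add: bilinear_ladd[OF bilinear_m])
  then have "Hg = 0"
    using ideal.m_nondegenerate[OF Hg(1)] by blast
  then show ?thesis
    using Hg by simp
qed

definition sff :: "'a \<Rightarrow> 'a \<Rightarrow> 'a"
  where "sff v w = (SOME z. z \<in> a \<and> (\<forall>X\<in>a. m z X = m (br X v) w))"

lemma sff: "sff v w \<in> a" "X \<in> a \<Longrightarrow> m (sff v w) X = m (br X v) w"
proof -
  have "linear (\<lambda>X. m (br X v) w)"
    by (intro linearI) (simp_all add: bilinear_ladd[OF bilinear_br] bilinear_lmul[OF bilinear_br]
        bilinear_ladd[OF bilinear_m] bilinear_lmul[OF bilinear_m])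
  then obtain z where "z \<in> a" "\<And>X. X \<in> a \<Longrightarrow> m z X = m (br X v) w"
    using abelian.functional_representable by blast
  then have "\<exists>z. z \<in> a \<and> (\<forall>X\<in>a. m z X = m (br X v) w)"
    by blast
  then have "sff v w \<in> a \<and> (\<forall>X\<in>a. m (sff v w) X = m (br X v) w)"
    unfolding sff_def by (rule someI_ex)
  then show "sff v w \<in> a" "X \<in> a \<Longrightarrow> m (sff v w) X = m (br X v) w"
    by blast+
qed

abbreviation nabla where "nabla \<equiv> lc_nabla UNIV br m"
abbreviation nabla_g where "nabla_g \<equiv> lc_nabla g br m"

lemma nabla_a_left: "X \<in> a \<Longrightarrow> nabla X u = 0"
  using g_a_orthogonal[OF bracket_in_g] m_br_a_swap
  by (intro ambient.lc_nabla_eqI) (simp_all add: koszul_def bilinear_lzero[OF bilinear_m])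

lemma nabla_a_right: "Y \<in> a \<Longrightarrow> nabla u Y = br u Y"
  using g_a_orthogonal[OF bracket_in_g] m_br_a_swap
  by (intro ambient.lc_nabla_eqI) (simp_all add: koszul_def)

lemma nabla_g_g:
  assumes "v \<in> g" "w \<in> g"
  shows "nabla v w = nabla_g v w + sff v w"
proof (rule ambient.lc_nabla_eqI)
  fix x
  obtain xg xa where x: "xg \<in> g" "xa \<in> a" "x = xg + xa"
    by (rule decompose)
  have "koszul br m v w xa = 2 * m (br xa v) w"
    using g_a_orthogonal[OF bracket_in_g x(2)] m_br_a_swap[OF x(2), of w v]
    by (simp add: koszul_def)
  moreover have "koszul br m v w x = koszul br m v w xg + koszul br m v w xa"
    using x(3) koszul_linear[OF bilinear_br bilinear_m] by (simp add: linear_add)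
  moreover have "m (nabla_g v w + sff v w) x = m (nabla_g v w) xg + m (sff v w) xa"
    using x g_a_orthogonal[OF ideal.lc_nabla_mem x(2)] a_g_orthogonal[OF x(1) sff(1)]
    by (simp add: bilinear_ladd[OF bilinear_m] bilinear_radd[OF bilinear_m])
  ultimately show "2 * m (nabla_g v w + sff v w) x = koszul br m v w x"
    using ideal.lc_nabla_koszul[OF x(1)] sff(2)[OF x(2)] by (simp add: distrib_left)
qed simp

lemma m_nabla_g_g:
  assumes "v \<in> g" "w \<in> g" "y \<in> g"
  shows "2 * m (nabla v w) y = koszul br m v w y"
  using nabla_g_g[OF assms(1,2)] ideal.lc_nabla_koszul[OF assms(3)] a_g_orthogonal[OF assms(3) sff(1)]
  by (simp add: bilinear_ladd[OF bilinear_m])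

lemma curv_any_a_a:
  assumes "X \<in> a" "Y \<in> a"
  shows "curv UNIV br m x X Y = - br X (br Y x)"
proof -
  have "br X (br Y x) = br Y (br X x)"
    using br_jacobi[of X Y x] a_abelian[OF assms] by (simp add: bilinear_lzero[OF bilinear_br])
  also have "\<dots> = br (br x X) Y"
    using br_anticomm[of "br x X" Y] br_anticomm[of x X] by (simp add: bilinear_rneg[OF bilinear_br])
  finally show ?thesis
    using assms by (simp add: curv_def nabla_a_left nabla_a_right bilinear_rzero[OF ambient.bilinear_lc_nabla])
qed

lemma ricci_a_a:
  assumes "X \<in> a" "Y \<in> a"
  shows "ricci UNIV br m X Y = - trace_on UNIV (br X \<circ> br Y)"
proof -
  have "(\<lambda>x. curv UNIV br m x X Y) = (\<lambda>x. - (br X \<circ> br Y) x)"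
    using curv_any_a_a[OF assms] by auto
  then show ?thesis
    by (simp add: ricci_def trace_on_uminus comp_def)
qed

lemma curv_a_any_a:
  assumes "c \<in> a" "X \<in> a"
  shows "curv UNIV br m c v X = - br (br c v) X"
  using assms by (simp add: curv_def nabla_a_left nabla_a_right bilinear_rzero[OF ambient.bilinear_lc_nabla])

lemma m_curv_g_g_a:
  assumes "b \<in> g" "v \<in> g" "X \<in> a" "y \<in> g"
  shows "2 * m (curv UNIV br m b v X) y
    = koszul br m b (br v X) y - koszul br m v (br b X) y - 2 * m (br (br b v) X) y"
proof -
  have "curv UNIV br m b v X = nabla b (br v X) - nabla v (br b X) - br (br b v) X"
    using assms(3) by (simp add: curv_def nabla_a_right)
  then show ?thesis
    using m_nabla_g_g[OF assms(1) bracket_in_g assms(4)] m_nabla_g_g[OF assms(2) bracket_in_g assms(4)]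
    by (simp add: bilinear_lsub[OF bilinear_m] right_diff_distrib)
qed

lemma m_curv_a_any_g:
  assumes "c \<in> a" "w \<in> g" "Z \<in> a"
  shows "m (curv UNIV br m c v w) Z = - m (br Z (br c v)) w"
proof -
  have "curv UNIV br m c v w = - (nabla_g (br c v) w + sff (br c v) w)"
    using assms(1) nabla_g_g[OF bracket_in_g assms(2)]
    by (simp add: curv_def nabla_a_left bilinear_rzero[OF ambient.bilinear_lc_nabla])
  then show ?thesis
    using g_a_orthogonal[OF ideal.lc_nabla_mem assms(3)] sff(2)[OF assms(3)]
    by (simp add: bilinear_lneg[OF bilinear_m] bilinear_lsub[OF bilinear_m])
qed

lemma m_curv_g_g_g:
  assumes "b \<in> g" "v \<in> g" "w \<in> g" "y \<in> g"
  shows "m (curv UNIV br m b v w) y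
    = m (curv g br m b v w) y + m (br b (sff v w)) y - m (br v (sff b w)) y"
proof -
  have "curv UNIV br m b v w = curv g br m b v w + br b (sff v w) - br v (sff b w)
      + (sff b (nabla_g v w) - sff v (nabla_g b w) - sff (br b v) w)"
    using assms ideal.lc_nabla_mem bracket_in_g sff(1)
    by (simp add: curv_def nabla_g_g nabla_a_right bilinear_radd[OF ambient.bilinear_lc_nabla] algebra_simps)
  moreover have "m (sff b (nabla_g v w) - sff v (nabla_g b w) - sff (br b v) w) y = 0"
    using a_g_orthogonal[OF assms(4) sff(1)] by (simp add: bilinear_lsub[OF bilinear_m])
  ultimately show ?thesis
    by (simp add: bilinear_ladd[OF bilinear_m] bilinear_lsub[OF bilinear_m])
qed

end

section \<open>The Ricci tensor in dual frames\<close>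

locale pseudo_iwasawa_frames = pseudo_iwasawa_algebra br m g a
  for br :: "'a::euclidean_space \<Rightarrow> 'a \<Rightarrow> 'a" and m g a +
  fixes Bg Ba :: "'a set" and fg fa :: "'a \<Rightarrow> 'a"
  assumes frame_g: "dual_frame g m Bg fg" and frame_a: "dual_frame a m Ba fa"
begin

lemma frame_g_mem: "b \<in> Bg \<Longrightarrow> b \<in> g" "b \<in> Bg \<Longrightarrow> fg b \<in> g"
  and frame_a_mem: "c \<in> Ba \<Longrightarrow> c \<in> a" "c \<in> Ba \<Longrightarrow> fa c \<in> a"
  using dual_frameD(2,3)[OF frame_g] dual_frameD(2,3)[OF frame_a] by auto

lemma trace_on_UNIV_frames:
  assumes "linear T"
  shows "trace_on UNIV T = (\<Sum>b\<in>Bg. m (T b) (fg b)) + (\<Sum>c\<in>Ba. m (T c) (fa c))"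
proof -
  \<comment> \<open>Indexing by the disjoint sum avoids showing that the two frames are disjoint.\<close>
  let ?e = "case_sum (\<lambda>b. b) (\<lambda>c. c)"
  let ?\<phi> = "case_sum (\<lambda>b x. m x (fg b)) (\<lambda>c x. m x (fa c))"
  have fin: "finite (Bg <+> Ba)"
    using dual_frameD(1)[OF frame_g] dual_frameD(1)[OF frame_a] by simp
  have "trace_on UNIV T = (\<Sum>i\<in>Bg <+> Ba. ?\<phi> i (T (?e i)))"
  proof (rule trace_on_frame[OF subspace_UNIV assms _ fin])
    show "linear (?\<phi> i)" for i
      using bilinear_m by (cases i) (simp_all add: bilinear_def)
    fix x :: 'a
    obtain v X where vX: "v \<in> g" "X \<in> a" "x = v + X"
      by (rule decompose)
    have "(\<Sum>b\<in>Bg. m x (fg b) *\<^sub>R b) = v"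
      using vX frame_g_mem a_g_orthogonal dual_frame_expansion[OF frame_g vX(1)]
      by (simp add: bilinear_ladd[OF bilinear_m])
    moreover have "(\<Sum>c\<in>Ba. m x (fa c) *\<^sub>R c) = X"
      using vX frame_a_mem g_a_orthogonal dual_frame_expansion[OF frame_a vX(2)]
      by (simp add: bilinear_ladd[OF bilinear_m])
    ultimately show "x = (\<Sum>i\<in>Bg <+> Ba. ?\<phi> i x *\<^sub>R ?e i)"
      using vX(3) dual_frameD(1)[OF frame_g] dual_frameD(1)[OF frame_a] by (simp add: sum.Plus comp_def)
  qed simp_all
  then show ?thesis
    using dual_frameD(1)[OF frame_g] dual_frameD(1)[OF frame_a] by (simp add: sum.Plus comp_def)
qed

lemma frame_g_sums_lowering:
  assumes T: "linear T" "\<And>k x. x \<in> lcs br g k \<Longrightarrow> T x \<in> lcs br g (Suc k)"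
  shows "(\<Sum>b\<in>Bg. m (T b) (fg b)) = 0" "(\<Sum>b\<in>Bg. m (T (fg b)) b) = 0"
proof -
  have Tg: "T ` g \<subseteq> g"
    using T(2)[of _ 0] lcs_subset_g[of 1] by auto
  show first: "(\<Sum>b\<in>Bg. m (T b) (fg b)) = 0"
    using ideal.dual_frame_trace[OF frame_g T(1) Tg] trace_on_g_lowering[OF T] by simp
  have "bilinear (\<lambda>x y. m (T y) x)"
    using T(1) bilinear_m unfolding bilinear_def by (auto intro: linear_compose[unfolded o_def])
  from ideal.dual_frame_sum_swap[OF frame_g this] show "(\<Sum>b\<in>Bg. m (T (fg b)) b) = 0"
    using first by simp
qed

lemma sum_br_frame_g: "(\<Sum>b\<in>Bg. br b (fg b)) = 0" "(\<Sum>b\<in>Bg. br (fg b) b) = 0"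
proof -
  have swap: "(\<Sum>b\<in>Bg. br (fg b) b) = (\<Sum>b\<in>Bg. br b (fg b))"
    by (rule ideal.dual_frame_sum_swap[OF frame_g bilinear_br])
  also have "\<dots> = (\<Sum>b\<in>Bg. - br (fg b) b)"
    by (rule sum.cong[OF refl]) (rule br_anticomm)
  also have "\<dots> = - (\<Sum>b\<in>Bg. br (fg b) b)"
    by (rule sum_negf)
  finally show "(\<Sum>b\<in>Bg. br (fg b) b) = 0"
    by (simp add: eq_neg_iff_add_eq_0 scaleR_2[symmetric])
  with swap show "(\<Sum>b\<in>Bg. br b (fg b)) = 0"
    by simp
qed

lemma sum_br_ad_frame_g:
  assumes X: "X \<in> a"
  shows "(\<Sum>b\<in>Bg. br (br b X) (fg b)) = 0"
proof -
  let ?P = "\<Sum>b\<in>Bg. br (br X b) (fg b)"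
  have adjoint: "?P = (\<Sum>b\<in>Bg. br b (br X (fg b)))"
    using ad_a_self_adjoint[OF X] g_ideal
    by (intro ideal.dual_frame_sum_adjoint[OF frame_g bilinear_br]) auto
  have "br X (\<Sum>b\<in>Bg. br b (fg b)) = (\<Sum>b\<in>Bg. br X (br b (fg b)))"
    using linear_br_right by (rule linear_sum)
  also have "\<dots> = (\<Sum>b\<in>Bg. br (br X b) (fg b) + br b (br X (fg b)))"
    by (rule sum.cong[OF refl]) (rule br_jacobi)
  also have "\<dots> = 2 *\<^sub>R ?P"
    using adjoint by (simp add: sum.distrib scaleR_2)
  finally have "?P = 0"
    using sum_br_frame_g(1) by (simp add: bilinear_rzero[OF bilinear_br])
  moreover have "br (br b X) y = - br (br X b) y" for b y
    using br_anticomm[of b X] by (simp add: bilinear_lneg[OF bilinear_br])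
  ultimately show ?thesis
    by (simp add: sum_negf)
qed

lemma sum_koszul_frame_g:
  assumes u: "u \<in> g"
  shows "(\<Sum>b\<in>Bg. koszul br m b u (fg b)) = 0"
proof -
  have "(\<Sum>b\<in>Bg. koszul br m b u (fg b)) = (\<Sum>b\<in>Bg. m (br b u) (fg b))
      - (\<Sum>b\<in>Bg. m (br u (fg b)) b) + m (\<Sum>b\<in>Bg. br (fg b) b) u"
    by (simp add: koszul_def sum_subtractf sum.distrib m_sum_left)
  moreover have "(\<Sum>b\<in>Bg. m (br b u) (fg b)) = 0"
    using lcs_bracket'[OF u] by (intro frame_g_sums_lowering(1)[OF linear_br_left])
  moreover have "(\<Sum>b\<in>Bg. m (br u (fg b)) b) = 0"
    using lcs_bracket[OF u] by (intro frame_g_sums_lowering(2)[OF linear_br_right])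
  ultimately show ?thesis
    using sum_br_frame_g(2) by (simp add: bilinear_lzero[OF bilinear_m])
qed

lemma sum_koszul_ad_frame_g:
  assumes v: "v \<in> g" and X: "X \<in> a"
  shows "(\<Sum>b\<in>Bg. koszul br m v (br b X) (fg b)) = 0"
proof -
  have "m (br (fg b) v) (br b X) = - m (br X (br (fg b) v)) b" for b
    using ad_a_self_adjoint[OF X, of "br (fg b) v" b] br_anticomm[of b X]
    by (simp add: bilinear_rneg[OF bilinear_m])
  then have "(\<Sum>b\<in>Bg. koszul br m v (br b X) (fg b)) = (\<Sum>b\<in>Bg. m (br v (br b X)) (fg b))
      - m (\<Sum>b\<in>Bg. br (br b X) (fg b)) v - (\<Sum>b\<in>Bg. m (br X (br (fg b) v)) b)"
    by (simp add: koszul_def sum_subtractf sum.distrib m_sum_left sum_negf)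
  moreover have "(\<Sum>b\<in>Bg. m (br v (br b X)) (fg b)) = 0"
  proof (rule frame_g_sums_lowering(1))
    show "linear (\<lambda>x. br v (br x X))"
      using linear_compose[OF linear_br_left linear_br_right] by (simp add: o_def)
    show "br v (br x X) \<in> lcs br g (Suc k)" if "x \<in> lcs br g k" for k x
      using lcs_bracket[OF v lcs_ad_invariant_left[OF that]] .
  qed
  moreover have "(\<Sum>b\<in>Bg. m (br X (br (fg b) v)) b) = 0"
  proof (rule frame_g_sums_lowering(2))
    show "linear (\<lambda>x. br X (br x v))"
      using linear_compose[OF linear_br_left linear_br_right] by (simp add: o_def)
    show "br X (br x v) \<in> lcs br g (Suc k)" if "x \<in> lcs br g k" for k x
      using lcs_ad_invariant[OF lcs_bracket'[OF v that]] .
  qed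
  ultimately show ?thesis
    using sum_br_ad_frame_g[OF X] by (simp add: bilinear_lzero[OF bilinear_m])
qed

lemma sum_double_br_frame_g:
  assumes v: "v \<in> g"
  shows "(\<Sum>b\<in>Bg. m (br (br b v) X) (fg b)) = 0"
proof (rule frame_g_sums_lowering(1))
  show "linear (\<lambda>x. br (br x v) X)"
    using linear_compose[OF linear_br_left linear_br_left] by (simp add: o_def)
  show "br (br x v) X \<in> lcs br g (Suc k)" if "x \<in> lcs br g k" for k x
    using lcs_ad_invariant_left[OF lcs_bracket'[OF v that]] .
qed

lemma ricci_g_a:
  assumes v: "v \<in> g" and X: "X \<in> a"
  shows "ricci UNIV br m v X = 0"
proof -
  let ?R = "\<lambda>x. curv UNIV br m x v X"
  have "ricci UNIV br m v X = (\<Sum>b\<in>Bg. m (?R b) (fg b)) + (\<Sum>c\<in>Ba. m (?R c) (fa c))"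
    unfolding ricci_def by (rule trace_on_UNIV_frames[OF ambient.linear_curv])
  moreover have "m (?R c) (fa c) = 0" if "c \<in> Ba" for c
    using curv_a_any_a[OF frame_a_mem(1)[OF that] X] g_a_orthogonal[OF bracket_in_g frame_a_mem(2)[OF that]]
    by (simp add: bilinear_lneg[OF bilinear_m])
  moreover have "2 * (\<Sum>b\<in>Bg. m (?R b) (fg b)) = (\<Sum>b\<in>Bg. koszul br m b (br v X) (fg b))
      - (\<Sum>b\<in>Bg. koszul br m v (br b X) (fg b)) - 2 * (\<Sum>b\<in>Bg. m (br (br b v) X) (fg b))"
    using m_curv_g_g_a[OF frame_g_mem(1) v X frame_g_mem(2)]
    by (simp add: sum_distrib_left sum_subtractf)
  ultimately show ?thesis
    using sum_koszul_frame_g[OF bracket_in_g] sum_koszul_ad_frame_g[OF v X] sum_double_br_frame_g[OF v]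
    by simp
qed

lemma sum_br_a_frame_g:
  assumes q: "q \<in> a"
  shows "(\<Sum>b\<in>Bg. m (br b q) (fg b)) = - trace_on UNIV (br q)"
proof -
  have "(\<Sum>b\<in>Bg. m (br b q) (fg b)) = - (\<Sum>b\<in>Bg. m (br q b) (fg b))"
    using br_anticomm[of _ q] by (simp add: bilinear_lneg[OF bilinear_m] sum_negf[symmetric])
  also have "(\<Sum>b\<in>Bg. m (br q b) (fg b)) = trace_on g (br q)"
    using g_ideal by (intro ideal.dual_frame_trace[OF frame_g linear_br_right, symmetric]) auto
  also have "\<dots> = trace_on UNIV (br q)"
    using subspace_g bracket_in_g by (intro trace_on_subspace[symmetric, OF subspace_UNIV _ _ linear_br_right]) auto
  finally show ?thesis .
qed

lemma sum_sff_frame_g: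
  assumes w: "w \<in> g"
  shows "(\<Sum>b\<in>Bg. m (br v (sff b w)) (fg b)) = (\<Sum>c\<in>Ba. m (br c (br v (fa c))) w)"
proof -
  have "sff b w = (\<Sum>c\<in>Ba. m (br c b) w *\<^sub>R fa c)" for b
    using dual_frame_expansion'[OF frame_a sff(1)] sff(2)[OF frame_a_mem(1)] by simp
  then have "(\<Sum>b\<in>Bg. m (br v (sff b w)) (fg b))
      = (\<Sum>b\<in>Bg. \<Sum>c\<in>Ba. m (br c b) w * m (br v (fa c)) (fg b))"
    by (simp add: bilinear_sum_scale_right[OF bilinear_br] m_sum_left bilinear_lmul[OF bilinear_m])
  also have "\<dots> = (\<Sum>c\<in>Ba. \<Sum>b\<in>Bg. m (br c b) w * m (br v (fa c)) (fg b))"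
    by (rule sum.swap)
  also have "\<dots> = (\<Sum>c\<in>Ba. m (br c (br v (fa c))) w)"
  proof (rule sum.cong[OF refl])
    fix c assume c: "c \<in> Ba"
    have "m (br c b) w = m (br c w) b" for b
      using ad_a_self_adjoint[OF frame_a_mem(1)[OF c], of b w] m_sym[of b] by simp
    then have "(\<Sum>b\<in>Bg. m (br c b) w * m (br v (fa c)) (fg b))
        = m (br v (fa c)) (\<Sum>b\<in>Bg. m (br c w) b *\<^sub>R fg b)"
      by (simp add: bilinear_sum_scale_right[OF bilinear_m])
    also have "\<dots> = m (br v (fa c)) (br c w)"
      using dual_frame_expansion'[OF frame_g bracket_in_g] by simp
    also have "\<dots> = m (br c (br v (fa c))) w"
      using ad_a_self_adjoint[OF frame_a_mem(1)[OF c]] by simp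
    finally show "(\<Sum>b\<in>Bg. m (br c b) w * m (br v (fa c)) (fg b)) = m (br c (br v (fa c))) w" .
  qed
  finally show ?thesis .
qed

lemma ricci_g_g:
  assumes v: "v \<in> g" and w: "w \<in> g" and H: "\<And>u. m H u = trace_on UNIV (br u)"
  shows "ricci UNIV br m v w = ricci g br m v w - m (br H v) w"
proof -
  let ?R = "\<lambda>x. curv UNIV br m x v w"
  have ricci_g_frame: "ricci g br m v w = (\<Sum>b\<in>Bg. m (curv g br m b v w) (fg b))"
    unfolding ricci_def using ideal.curv_mem
    by (intro ideal.dual_frame_trace[OF frame_g ideal.linear_curv]) auto
  have "ricci UNIV br m v w = (\<Sum>b\<in>Bg. m (?R b) (fg b)) + (\<Sum>c\<in>Ba. m (?R c) (fa c))"
    unfolding ricci_def by (rule trace_on_UNIV_frames[OF ambient.linear_curv])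
  also have "(\<Sum>c\<in>Ba. m (?R c) (fa c)) = - (\<Sum>c\<in>Ba. m (br (fa c) (br c v)) w)"
    using m_curv_a_any_g[OF frame_a_mem(1) w frame_a_mem(2)] by (simp add: sum_negf)
  also have "(\<Sum>b\<in>Bg. m (?R b) (fg b)) = ricci g br m v w + (\<Sum>b\<in>Bg. m (br b (sff v w)) (fg b))
      - (\<Sum>b\<in>Bg. m (br v (sff b w)) (fg b))"
    using m_curv_g_g_g[OF frame_g_mem(1) v w frame_g_mem(2)] ricci_g_frame
    by (simp add: sum.distrib sum_subtractf)
  also have "(\<Sum>b\<in>Bg. m (br b (sff v w)) (fg b)) = - m (br H v) w"
    using sum_br_a_frame_g[OF sff(1)] H[of "sff v w"] m_sym[of H] sff(2)[OF mean_curvature_in_a[OF H]]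
    by simp
  also have "(\<Sum>b\<in>Bg. m (br v (sff b w)) (fg b)) = - (\<Sum>c\<in>Ba. m (br (fa c) (br c v)) w)"
  proof -
    have "br c (br v (fa c)) = - br (fa c) (br c v)" if "c \<in> Ba" for c
      using br_jacobi[of c v "fa c"] a_abelian[OF frame_a_mem[OF that]] br_anticomm[of "br c v" "fa c"]
      by (simp add: bilinear_rzero[OF bilinear_br])
    then show ?thesis
      using sum_sff_frame_g[OF w] by (simp add: bilinear_lneg[OF bilinear_m] sum_negf)
  qed
  finally show ?thesis
    by simp
qed

end

theorem lemma3p8:
  fixes br :: "'a::euclidean_space \<Rightarrow> 'a \<Rightarrow> 'a" and m :: "'a \<Rightarrow> 'a \<Rightarrow> real"
    and g a :: "'a set" and H :: 'a
  assumes "lie_algebra_on UNIV br" and "metric_on UNIV m"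
    and "pseudo_iwasawa br m g a"
    and "\<forall>v. m H v = trace_on UNIV (br v)"
  shows "(\<forall>v\<in>g. \<forall>w\<in>g. ricci UNIV br m v w = ricci g br m v w - m (br H v) w)
       \<and> (\<forall>v\<in>g. \<forall>X\<in>a. ricci UNIV br m v X = 0)
       \<and> (\<forall>X\<in>a. \<forall>Y\<in>a. ricci UNIV br m X Y = - trace_on UNIV (br X \<circ> br Y))"
proof -
  interpret pseudo_iwasawa_algebra br m g a
    using assms(1-3) by unfold_locales
  obtain Bg fg Ba fa where "dual_frame g m Bg fg" "dual_frame a m Ba fa"
    using ideal.dual_frame_exists abelian.dual_frame_exists by metis
  then interpret pseudo_iwasawa_frames br m g a Bg Ba fg fa
    by unfold_locales
  show ?thesis
    using ricci_g_g ricci_g_a ricci_a_a assms(4) by blast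
qed

end
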